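(* For every integer $p$ and every first-order graph formula $\phi$ with free variables among $x_1,\dots,x_p$ there exists a polynomial $P_\phi\in\mathbb Z[X_{i,j}:1\le i<j\le p]$ (in $\binom p2$ variables) such that for every sequence $(G_n)_{n\in\mathbb N}$ of finite graphs that converges elementarily to the Rado graph the following holds: if $(G_n)$ is L-convergent to a graphon $W$, then $$\lim_{n\to\infty}\langle\phi,G_n\rangle=\int_{[0,1]^p}P_\phi\big((W(x_i,x_j))_{1\le i<j\le p}\big)\,\mathrm dx_1\cdots\mathrm dx_p.$$
   Context: $\langle\phi,G\rangle=|\{(v_1,\dots,v_p)\in V(G)^p:G\models\phi(v_1,\dots,v_p)\}|/|G|^p$. $(G_n)$ converges elementarily to $H$ if for every first-order sentence $\theta$, $H\models\theta$ iff $G_n\models\theta$ for all sufficiently large $n$. The Rado graph is the unique countable graph such that for all finite disjoint vertex sets $A,B$ there is a vertex outside $A\cup B$ adjacent to all of $A$ and none of $B$. A graphon is a symmetric measurable $W:[0,1]^2\to[0,1]$; $(G_n)$ is L-convergent to $W$ if for every finite graph $F$ on $\{1,\dots,k\}$, $\hom(F,G_n)/|G_n|^k\to\int_{[0,1]^k}\prod_{ij\in E(F)}W(x_i,x_j)\,\mathrm dx$. *)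

theory Defs
  imports "HOL-Analysis.Analysis"
begin

text \<open>Variables are indexed by natural numbers; x_i is variable i.\<close>
datatype fm = Eq nat nat | Adj nat nat | Neg fm | Conj fm fm | Disj fm fm
  | Ex nat fm | All nat fm

fun fv :: "fm \<Rightarrow> nat set" where
  "fv (Eq i j) = {i, j}"
| "fv (Adj i j) = {i, j}"
| "fv (Neg f) = fv f"
| "fv (Conj f g) = fv f \<union> fv g"
| "fv (Disj f g) = fv f \<union> fv g"
| "fv (Ex x f) = fv f - {x}"
| "fv (All x f) = fv f - {x}"

fun sat :: "'a set \<Rightarrow> ('a \<Rightarrow> 'a \<Rightarrow> bool) \<Rightarrow> (nat \<Rightarrow> 'a) \<Rightarrow> fm \<Rightarrow> bool" where
  "sat V E a (Eq i j) = (a i = a j)"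
| "sat V E a (Adj i j) = E (a i) (a j)"
| "sat V E a (Neg f) = (\<not> sat V E a f)"
| "sat V E a (Conj f g) = (sat V E a f \<and> sat V E a g)"
| "sat V E a (Disj f g) = (sat V E a f \<or> sat V E a g)"
| "sat V E a (Ex x f) = (\<exists>v\<in>V. sat V E (a(x := v)) f)"
| "sat V E a (All x f) = (\<forall>v\<in>V. sat V E (a(x := v)) f)"

text \<open>Truth of a sentence (assignment irrelevant).\<close>
definition models :: "'a set \<Rightarrow> ('a \<Rightarrow> 'a \<Rightarrow> bool) \<Rightarrow> fm \<Rightarrow> bool" where
  "models V E \<theta> = sat V E (\<lambda>_. undefined) \<theta>"

definition is_graph :: "'a set \<Rightarrow> ('a \<Rightarrow> 'a \<Rightarrow> bool) \<Rightarrow> bool" where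
  "is_graph V E \<longleftrightarrow> (\<forall>u\<in>V. \<forall>v\<in>V. E u v = E v u) \<and> (\<forall>v\<in>V. \<not> E v v)"

definition finite_graph :: "'a set \<Rightarrow> ('a \<Rightarrow> 'a \<Rightarrow> bool) \<Rightarrow> bool" where
  "finite_graph V E \<longleftrightarrow> finite V \<and> is_graph V E"

text \<open>The Rado graph: a countable graph (here with vertex set UNIV :: nat set)
  with the extension property; it is unique up to isomorphism.\<close>
definition is_rado :: "(nat \<Rightarrow> nat \<Rightarrow> bool) \<Rightarrow> bool" where
  "is_rado R \<longleftrightarrow> is_graph UNIV R \<and>
     (\<forall>A B. finite A \<and> finite B \<and> A \<inter> B = {} \<longrightarrow>
        (\<exists>v. v \<notin> A \<union> B \<and> (\<forall>a\<in>A. R v a) \<and> (\<forall>b\<in>B. \<not> R v b)))"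

definition elem_conv :: "(nat \<Rightarrow> 'a set \<times> ('a \<Rightarrow> 'a \<Rightarrow> bool)) \<Rightarrow> 'b set \<Rightarrow> ('b \<Rightarrow> 'b \<Rightarrow> bool) \<Rightarrow> bool" where
  "elem_conv G HV HE \<longleftrightarrow> (\<forall>\<theta>. fv \<theta> = {} \<longrightarrow>
      (models HV HE \<theta> \<longleftrightarrow> (\<forall>\<^sub>F n in sequentially. models (fst (G n)) (snd (G n)) \<theta>)))"

definition stone :: "nat \<Rightarrow> fm \<Rightarrow> 'a set \<Rightarrow> ('a \<Rightarrow> 'a \<Rightarrow> bool) \<Rightarrow> real" where
  "stone p \<phi> V E = real (card {a \<in> {1..p} \<rightarrow>\<^sub>E V. sat V E a \<phi>}) / real (card V) ^ p"

definition graphon :: "(real \<Rightarrow> real \<Rightarrow> real) \<Rightarrow> bool" where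
  "graphon W \<longleftrightarrow>
     (\<lambda>z. W (fst z) (snd z)) \<in> borel_measurable (restrict_space (lborel \<Otimes>\<^sub>M lborel) ({0..1} \<times> {0..1}))
   \<and> (\<forall>x\<in>{0..1}. \<forall>y\<in>{0..1}. W x y = W y x \<and> 0 \<le> W x y \<and> W x y \<le> 1)"

text \<open>Lebesgue measure on [0,1]^k, coordinates indexed by 1..k.\<close>
definition unit_cube :: "nat \<Rightarrow> (nat \<Rightarrow> real) measure" where
  "unit_cube k = PiM {1..k} (\<lambda>_. restrict_space lborel {0..1})"

text \<open>A finite graph F on {1..k} is given by its edge set of pairs (i,j), i<j.\<close>
definition hom_count :: "nat \<Rightarrow> (nat \<times> nat) set \<Rightarrow> 'a set \<Rightarrow> ('a \<Rightarrow> 'a \<Rightarrow> bool) \<Rightarrow> nat" where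
  "hom_count k F V E = card {f \<in> {1..k} \<rightarrow>\<^sub>E V. \<forall>(i,j)\<in>F. E (f i) (f j)}"

definition hom_density_W :: "nat \<Rightarrow> (nat \<times> nat) set \<Rightarrow> (real \<Rightarrow> real \<Rightarrow> real) \<Rightarrow> real" where
  "hom_density_W k F W = integral\<^sup>L (unit_cube k) (\<lambda>x. \<Prod>(i,j)\<in>F. W (x i) (x j))"

definition L_conv :: "(nat \<Rightarrow> 'a set \<times> ('a \<Rightarrow> 'a \<Rightarrow> bool)) \<Rightarrow> (real \<Rightarrow> real \<Rightarrow> real) \<Rightarrow> bool" where
  "L_conv G W \<longleftrightarrow> (\<forall>k F. F \<subseteq> {(i,j). 1 \<le> i \<and> i < j \<and> j \<le> k} \<longrightarrow>
      (\<lambda>n. real (hom_count k F (fst (G n)) (snd (G n))) / real (card (fst (G n))) ^ k)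
        \<longlonglongrightarrow> hom_density_W k F W)"

text \<open>Polynomial expressions with integer coefficients; every element of
  Z[X_{i,j}] is represented by such an expression.\<close>
datatype ipoly = PConst int | PVar nat nat | PAdd ipoly ipoly | PMul ipoly ipoly

fun pvars :: "ipoly \<Rightarrow> (nat \<times> nat) set" where
  "pvars (PConst c) = {}"
| "pvars (PVar i j) = {(i, j)}"
| "pvars (PAdd p q) = pvars p \<union> pvars q"
| "pvars (PMul p q) = pvars p \<union> pvars q"

fun peval :: "(nat \<Rightarrow> nat \<Rightarrow> real) \<Rightarrow> ipoly \<Rightarrow> real" where
  "peval v (PConst c) = real_of_int c"
| "peval v (PVar i j) = v i j"
| "peval v (PAdd p q) = peval v p + peval v q"
| "peval v (PMul p q) = peval v p * peval v q"

end

theory Submission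
  imports Defs "HOL-Probability.Probability"
begin

text \<open>Any two Rado graphs are related by back and forth, so whether an injective assignment of
  \<open>x\<^sub>1, \<dots>, x\<^sub>p\<close> satisfies \<open>\<phi>\<close> in a Rado graph depends only on the pattern \<open>F\<close> of edges among the
  assigned vertices; let \<open>S\<close> be the set of patterns for which it does. For each of the finitely
  many patterns, the sentence ``every injective assignment with pattern \<open>F\<close> satisfies \<open>\<phi>\<close>
  (resp. \<open>\<not>\<phi>\<close>)'' holds in the Rado graph, hence in \<open>G\<^sub>n\<close> for large \<open>n\<close>; moreover \<open>|G\<^sub>n| \<rightarrow> \<infinity>\<close>, so
  non-injective assignments are negligible and \<open>\<langle>\<phi>, G\<^sub>n\<rangle>\<close> is asymptotically the density of
  assignments with pattern in \<open>S\<close>. That density is the value at the adjacency indicators of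
  \<open>P\<^sub>\<phi> = \<Sum>\<^sub>F\<^sub>\<in>\<^sub>S \<Prod>\<^sub>e\<^sub>\<in>\<^sub>F X\<^sub>e \<Prod>\<^sub>e\<^sub>\<notin>\<^sub>F (1 - X\<^sub>e)\<close>, averaged over all assignments; expanding the
  products writes it as an integer combination of homomorphism densities, which converge to the
  corresponding graphon integrals.\<close>

definition All_list :: "nat list \<Rightarrow> fm \<Rightarrow> fm" where
  "All_list xs \<psi> = foldr All xs \<psi>"

lemma fv_All_list: "fv (All_list xs \<psi>) = fv \<psi> - set xs"
  unfolding All_list_def by (induction xs) auto

lemma sat_All_list: "sat V E a (All_list xs \<psi>) \<longleftrightarrow>
  (\<forall>b. (\<forall>k\<in>set xs. b k \<in> V) \<and> (\<forall>k. k \<notin> set xs \<longrightarrow> b k = a k) \<longrightarrow> sat V E b \<psi>)"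
proof (induction xs arbitrary: a)
  case Nil
  show ?case unfolding All_list_def by (simp add: fun_eq_iff[symmetric])
next
  case (Cons x xs)
  have "sat V E a (All_list (x#xs) \<psi>) = (\<forall>v\<in>V. sat V E (a(x:=v)) (All_list xs \<psi>))"
    by (simp add: All_list_def)
  also have "\<dots> \<longleftrightarrow> (\<forall>b. (\<forall>k\<in>set (x#xs). b k \<in> V) \<and> (\<forall>k. k \<notin> set (x#xs) \<longrightarrow> b k = a k) \<longrightarrow> sat V E b \<psi>)"
    unfolding Cons.IH
  proof (intro iffI allI impI ballI)
    fix b assume H: "\<forall>v\<in>V. \<forall>b. (\<forall>k\<in>set xs. b k \<in> V) \<and> (\<forall>k. k \<notin> set xs \<longrightarrow> b k = (a(x := v)) k) \<longrightarrow> sat V E b \<psi>"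
      and b: "(\<forall>k\<in>set (x#xs). b k \<in> V) \<and> (\<forall>k. k \<notin> set (x#xs) \<longrightarrow> b k = a k)"
    have "b x \<in> V" "\<forall>k\<in>set xs. b k \<in> V" "\<forall>k. k \<notin> set xs \<longrightarrow> b k = (a(x := b x)) k"
      using b by auto
    then show "sat V E b \<psi>" using H by blast
  next
    fix v b assume H: "\<forall>b. (\<forall>k\<in>set (x#xs). b k \<in> V) \<and> (\<forall>k. k \<notin> set (x#xs) \<longrightarrow> b k = a k) \<longrightarrow> sat V E b \<psi>"
      and "v \<in> V" and b: "(\<forall>k\<in>set xs. b k \<in> V) \<and> (\<forall>k. k \<notin> set xs \<longrightarrow> b k = (a(x := v)) k)"
    then have "\<forall>k\<in>set (x#xs). b k \<in> V" by (metis fun_upd_same set_ConsD)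
    moreover have "\<forall>k. k \<notin> set (x#xs) \<longrightarrow> b k = a k" using b by auto
    ultimately show "sat V E b \<psi>" using H by blast
  qed
  finally show ?case .
qed

lemma fv_All_list_upto: "fv (All_list [1..<p+1] \<psi>) = fv \<psi> - {1..p}"
  unfolding fv_All_list by auto

text \<open>Both sides use the assignment that is \<open>undefined\<close> outside \<open>{1..p}\<close>: \<open>models\<close> starts
  from it and \<open>\<rightarrow>\<^sub>E\<close> consists of functions extensional on \<open>{1..p}\<close>.\<close>
lemma models_All_list_upto:
  "models V E (All_list [1..<p+1] \<psi>) \<longleftrightarrow> (\<forall>b\<in>{1..p} \<rightarrow>\<^sub>E V. sat V E b \<psi>)"
proof -
  have "set [1..<p+1] = {1..p}" by auto
  then show ?thesis unfolding models_def sat_All_list by (auto simp: PiE_iff extensional_def)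
qed

lemma ex_fm_Ball:
  assumes "finite A"
  shows "\<exists>\<psi>. fv \<psi> \<subseteq> (\<Union>x\<in>A. fv (g x)) \<and> (\<forall>(V::'v set) E a. sat V E a \<psi> = (\<forall>x\<in>A. sat V E a (g x)))"
  using assms
proof (induction A rule: finite_induct)
  case empty
  show ?case by (intro exI[of _ "All 0 (Eq 0 0)"]) simp
next
  case (insert x A)
  then obtain \<psi> where "fv \<psi> \<subseteq> (\<Union>x\<in>A. fv (g x))"
    and "\<forall>(V::'v set) E a. sat V E a \<psi> = (\<forall>x\<in>A. sat V E a (g x))"
    by blast
  then show ?case by (intro exI[of _ "Conj (g x) \<psi>"]) auto
qed

section \<open>Back and forth between Rado graphs\<close>

definition partial_iso :: "('a \<Rightarrow> 'a \<Rightarrow> bool) \<Rightarrow> ('b \<Rightarrow> 'b \<Rightarrow> bool) \<Rightarrow> nat set \<Rightarrow> (nat \<Rightarrow> 'a) \<Rightarrow> (nat \<Rightarrow> 'b) \<Rightarrow> bool" where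
  "partial_iso R1 R2 T a b \<longleftrightarrow>
     (\<forall>i\<in>T. \<forall>j\<in>T. (a i = a j \<longleftrightarrow> b i = b j) \<and> (R1 (a i) (a j) \<longleftrightarrow> R2 (b i) (b j)))"

lemma partial_iso_sym: "partial_iso R1 R2 T a b \<Longrightarrow> partial_iso R2 R1 T b a"
  unfolding partial_iso_def by blast

lemma partial_iso_insert:
  assumes "is_graph UNIV R1" "is_graph UNIV R2" "partial_iso R1 R2 T a b"
    and "\<forall>j\<in>T - {x}. (v = a j \<longleftrightarrow> w = b j) \<and> (R1 v (a j) \<longleftrightarrow> R2 w (b j))"
  shows "partial_iso R1 R2 (insert x T) (a(x:=v)) (b(x:=w))"
  unfolding partial_iso_def
proof (intro ballI)
  fix i j assume "i \<in> insert x T" "j \<in> insert x T"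
  then show "((a(x:=v)) i = (a(x:=v)) j \<longleftrightarrow> (b(x:=w)) i = (b(x:=w)) j) \<and>
    (R1 ((a(x:=v)) i) ((a(x:=v)) j) \<longleftrightarrow> R2 ((b(x:=w)) i) ((b(x:=w)) j))"
    using assms unfolding partial_iso_def is_graph_def
    by (cases "i = x"; cases "j = x") (auto simp: eq_commute[of v] eq_commute[of w])
qed

lemma partial_iso_extend:
  assumes g1: "is_graph UNIV R1" and r2: "is_rado R2" and fin: "finite T"
    and iso: "partial_iso R1 R2 T a b"
  shows "\<exists>w. partial_iso R1 R2 (insert x T) (a(x:=v)) (b(x:=w))"
proof -
  have g2: "is_graph UNIV R2" using r2 unfolding is_rado_def by blast
  have "\<exists>w. \<forall>j\<in>T - {x}. (v = a j \<longleftrightarrow> w = b j) \<and> (R1 v (a j) \<longleftrightarrow> R2 w (b j))"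
  proof (cases "\<exists>y\<in>T - {x}. a y = v")
    case True
    then obtain y where "y \<in> T" "a y = v" by blast
    then show ?thesis using iso unfolding partial_iso_def by blast
  next
    case False
    let ?A = "b ` {y\<in>T - {x}. R1 v (a y)}" and ?B = "b ` {y\<in>T - {x}. \<not> R1 v (a y)}"
    have "?A \<inter> ?B = {}" using iso unfolding partial_iso_def by fastforce
    moreover have "finite ?A" "finite ?B" using fin by auto
    ultimately obtain w where "w \<notin> ?A \<union> ?B" "\<forall>u\<in>?A. R2 w u" "\<forall>u\<in>?B. \<not> R2 w u"
      using r2 unfolding is_rado_def by meson
    then show ?thesis using False by blast
  qed
  then show ?thesis using partial_iso_insert[OF g1 g2 iso] by blast
qed

lemma rado_sat_partial_iso:
  assumes "is_rado R1" "is_rado R2" "finite T" "fv \<phi> \<subseteq> T" "partial_iso R1 R2 T a b"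
  shows "sat UNIV R1 a \<phi> = sat UNIV R2 b \<phi>"
  using assms
proof (induction \<phi> arbitrary: T a b)
  case (Eq i j)
  then show ?case unfolding partial_iso_def by auto
next
  case (Adj i j)
  then show ?case unfolding partial_iso_def by auto
next
  case (Ex x f)
  have g: "is_graph UNIV R1" "is_graph UNIV R2" using Ex.prems unfolding is_rado_def by auto
  have IH: "sat UNIV R1 a' f = sat UNIV R2 b' f" if "partial_iso R1 R2 (insert x T) a' b'" for a' b'
    using Ex.prems that by (intro Ex.IH) auto
  show ?case
  proof
    assume "sat UNIV R1 a (Ex x f)"
    then obtain v where "sat UNIV R1 (a(x:=v)) f" by auto
    moreover obtain w where "partial_iso R1 R2 (insert x T) (a(x:=v)) (b(x:=w))"
      using partial_iso_extend[OF g(1) Ex.prems(2,3,5)] by blast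
    ultimately show "sat UNIV R2 b (Ex x f)" using IH by auto
  next
    assume "sat UNIV R2 b (Ex x f)"
    then obtain w where "sat UNIV R2 (b(x:=w)) f" by auto
    moreover obtain v where "partial_iso R2 R1 (insert x T) (b(x:=w)) (a(x:=v))"
      using partial_iso_extend[OF g(2) Ex.prems(1,3) partial_iso_sym[OF Ex.prems(5)]] by blast
    ultimately show "sat UNIV R1 a (Ex x f)" using IH partial_iso_sym by fastforce
  qed
next
  case (All x f)
  have g: "is_graph UNIV R1" "is_graph UNIV R2" using All.prems unfolding is_rado_def by auto
  have IH: "sat UNIV R1 a' f = sat UNIV R2 b' f" if "partial_iso R1 R2 (insert x T) a' b'" for a' b'
    using All.prems that by (intro All.IH) auto
  show ?case
  proof
    assume H: "sat UNIV R1 a (All x f)"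
    show "sat UNIV R2 b (All x f)"
    proof (simp, intro allI)
      fix w
      obtain v where "partial_iso R2 R1 (insert x T) (b(x:=w)) (a(x:=v))"
        using partial_iso_extend[OF g(2) All.prems(1,3) partial_iso_sym[OF All.prems(5)]] by blast
      with H IH partial_iso_sym show "sat UNIV R2 (b(x:=w)) f" by fastforce
    qed
  next
    assume H: "sat UNIV R2 b (All x f)"
    show "sat UNIV R1 a (All x f)"
    proof (simp, intro allI)
      fix v
      obtain w where "partial_iso R1 R2 (insert x T) (a(x:=v)) (b(x:=w))"
        using partial_iso_extend[OF g(1) All.prems(2,3,5)] by blast
      with H IH show "sat UNIV R1 (a(x:=v)) f" by auto
    qed
  qed
qed auto

section \<open>Edge patterns\<close>

definition pairs :: "nat \<Rightarrow> (nat \<times> nat) set" where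
  "pairs p = {(i,j). 1 \<le> i \<and> i < j \<and> j \<le> p}"

lemma finite_pairs: "finite (pairs p)"
  by (rule finite_subset[of _ "{1..p} \<times> {1..p}"]) (auto simp: pairs_def)

definition edge_pattern :: "nat \<Rightarrow> ('a \<Rightarrow> 'a \<Rightarrow> bool) \<Rightarrow> (nat \<Rightarrow> 'a) \<Rightarrow> (nat \<times> nat) set" where
  "edge_pattern p E f = {e \<in> pairs p. E (f (fst e)) (f (snd e))}"

lemma edge_pattern_subset: "edge_pattern p E f \<subseteq> pairs p"
  unfolding edge_pattern_def by auto

lemma inj_on_iff_pairs: "inj_on f {1..p} \<longleftrightarrow> (\<forall>e\<in>pairs p. f (fst e) \<noteq> f (snd e))"
proof
  assume "inj_on f {1..p}"
  then show "\<forall>e\<in>pairs p. f (fst e) \<noteq> f (snd e)" unfolding pairs_def inj_on_def by fastforce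
next
  assume H: "\<forall>e\<in>pairs p. f (fst e) \<noteq> f (snd e)"
  show "inj_on f {1..p}"
  proof (rule inj_onI, rule ccontr)
    fix i j assume "i \<in> {1..p}" "j \<in> {1..p}" "f i = f j" "i \<noteq> j"
    then have "(i,j) \<in> pairs p \<or> (j,i) \<in> pairs p" and "f i = f j" unfolding pairs_def by auto
    with H show False by force
  qed
qed

lemma partial_iso_of_edge_pattern_eq:
  assumes "is_graph UNIV R1" "is_graph UNIV R2" "inj_on a {1..p}" "inj_on b {1..p}"
    and pat: "edge_pattern p R1 a = edge_pattern p R2 b"
  shows "partial_iso R1 R2 {1..p} a b"
  unfolding partial_iso_def
proof (intro ballI conjI)
  fix i j assume i: "i \<in> {1..p}" and j: "j \<in> {1..p}"
  show "a i = a j \<longleftrightarrow> b i = b j"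
    using inj_on_eq_iff[OF assms(3) i j] inj_on_eq_iff[OF assms(4) i j] by simp
  have adj: "R1 (a i) (a j) \<longleftrightarrow> R2 (b i) (b j)" if "(i,j) \<in> pairs p" for i j
  proof -
    have "(i,j) \<in> edge_pattern p R1 a \<longleftrightarrow> (i,j) \<in> edge_pattern p R2 b" using pat by simp
    then show ?thesis using that unfolding edge_pattern_def by simp
  qed
  show "R1 (a i) (a j) \<longleftrightarrow> R2 (b i) (b j)"
  proof (cases i j rule: linorder_cases)
    case less
    then show ?thesis using adj i j unfolding pairs_def by simp
  next
    case equal
    then show ?thesis using assms(1,2) unfolding is_graph_def by simp
  next
    case greater
    then have "R1 (a j) (a i) \<longleftrightarrow> R2 (b j) (b i)" using adj i j unfolding pairs_def by simp
    then show ?thesis using assms(1,2) unfolding is_graph_def by simp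
  qed
qed

text \<open>Taking all Rado graphs at once makes this set, and hence the polynomial of the theorem,
  independent of the Rado graph at hand.\<close>
definition rado_patterns :: "nat \<Rightarrow> fm \<Rightarrow> (nat \<times> nat) set set" where
  "rado_patterns p \<phi> = {F. \<exists>R b. is_rado R \<and> inj_on b {1..p} \<and> edge_pattern p R b = F \<and> sat UNIV R b \<phi>}"

lemma rado_patterns_subset: "rado_patterns p \<phi> \<subseteq> Pow (pairs p)"
  unfolding rado_patterns_def using edge_pattern_subset by blast

lemma rado_sat_iff_edge_pattern:
  assumes R: "is_rado R" and fv: "fv \<phi> \<subseteq> {1..p}" and b: "inj_on b {1..p}"
  shows "sat UNIV R b \<phi> \<longleftrightarrow> edge_pattern p R b \<in> rado_patterns p \<phi>"
proof
  assume "sat UNIV R b \<phi>"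
  then show "edge_pattern p R b \<in> rado_patterns p \<phi>" unfolding rado_patterns_def using R b by blast
next
  assume "edge_pattern p R b \<in> rado_patterns p \<phi>"
  then obtain R' b' where R': "is_rado R'" "inj_on b' {1..p}" "edge_pattern p R' b' = edge_pattern p R b"
    and "sat UNIV R' b' \<phi>"
    unfolding rado_patterns_def by blast
  moreover have "partial_iso R' R {1..p} b' b"
    using R R' b unfolding is_rado_def by (intro partial_iso_of_edge_pattern_eq) auto
  ultimately show "sat UNIV R b \<phi>"
    using rado_sat_partial_iso[OF R'(1) R finite_atLeastAtMost fv] by simp
qed

lemma ex_fm_inj_on: "\<exists>\<psi>. fv \<psi> \<subseteq> {1..p} \<and> (\<forall>(V::'v set) E a. sat V E a \<psi> = inj_on a {1..p})"
proof -
  obtain \<psi> where fv: "fv \<psi> \<subseteq> (\<Union>e\<in>pairs p. fv (Neg (Eq (fst e) (snd e))))"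
    and sat: "\<forall>(V::'v set) E a. sat V E a \<psi> = (\<forall>e\<in>pairs p. sat V E a (Neg (Eq (fst e) (snd e))))"
    using ex_fm_Ball[OF finite_pairs, of "\<lambda>e. Neg (Eq (fst e) (snd e))"] by blast
  have "fv \<psi> \<subseteq> {1..p}" using fv unfolding pairs_def by auto
  moreover have "\<forall>(V::'v set) E a. sat V E a \<psi> = inj_on a {1..p}"
    unfolding inj_on_iff_pairs using sat by simp
  ultimately show ?thesis by blast
qed

lemma ex_fm_edge_pattern:
  assumes F: "F \<subseteq> pairs p"
  shows "\<exists>\<psi>. fv \<psi> \<subseteq> {1..p} \<and> (\<forall>(V::'v set) E a. sat V E a \<psi> = (edge_pattern p E a = F))"
proof -
  define g where "g e = (if e \<in> F then Adj (fst e) (snd e) else Neg (Adj (fst e) (snd e)))" for e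
  obtain \<psi> where fv: "fv \<psi> \<subseteq> (\<Union>e\<in>pairs p. fv (g e))"
    and sat: "\<forall>(V::'v set) E a. sat V E a \<psi> = (\<forall>e\<in>pairs p. sat V E a (g e))"
    using ex_fm_Ball[OF finite_pairs, of g] by blast
  have "\<forall>e\<in>pairs p. fv (g e) \<subseteq> {1..p}" unfolding g_def pairs_def by auto
  then have "fv \<psi> \<subseteq> {1..p}" using fv by blast
  moreover have "sat V E a \<psi> = (edge_pattern p E a = F)" for V :: "'v set" and E a
  proof -
    have "sat V E a \<psi> = (\<forall>e\<in>pairs p. E (a (fst e)) (a (snd e)) = (e \<in> F))"
      using sat unfolding g_def by auto
    also have "\<dots> = (edge_pattern p E a = F)"
      unfolding edge_pattern_def using F by blast
    finally show ?thesis .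
  qed
  ultimately show ?thesis by blast
qed

section \<open>Transfer along elementary convergence\<close>

lemma eventually_sat_iff_edge_pattern_eq:
  fixes G :: "nat \<Rightarrow> nat set \<times> (nat \<Rightarrow> nat \<Rightarrow> bool)"
  assumes fv: "fv \<phi> \<subseteq> {1..p}" and R: "is_rado R" and ec: "elem_conv G (UNIV::nat set) R"
    and F: "F \<subseteq> pairs p"
  shows "\<forall>\<^sub>F n in sequentially. \<forall>f\<in>{1..p} \<rightarrow>\<^sub>E fst (G n).
           inj_on f {1..p} \<and> edge_pattern p (snd (G n)) f = F \<longrightarrow>
           (sat (fst (G n)) (snd (G n)) f \<phi> \<longleftrightarrow> F \<in> rado_patterns p \<phi>)"
proof -
  obtain \<psi>\<^sub>i where fv_i: "fv \<psi>\<^sub>i \<subseteq> {1..p}" and sat_i: "\<forall>(V::nat set) E a. sat V E a \<psi>\<^sub>i = inj_on a {1..p}"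
    using ex_fm_inj_on by blast
  obtain \<psi>\<^sub>F where fv_F: "fv \<psi>\<^sub>F \<subseteq> {1..p}"
    and sat_F: "\<forall>(V::nat set) E a. sat V E a \<psi>\<^sub>F = (edge_pattern p E a = F)"
    using ex_fm_edge_pattern[OF F] by blast
  define \<phi>' where "\<phi>' = (if F \<in> rado_patterns p \<phi> then \<phi> else Neg \<phi>)"
  define \<theta> where "\<theta> = All_list [1..<p+1] (Disj (Neg (Conj \<psi>\<^sub>i \<psi>\<^sub>F)) \<phi>')"
  have "fv \<theta> = {}" unfolding \<theta>_def fv_All_list_upto \<phi>'_def using fv_i fv_F fv by auto
  moreover have "models UNIV R \<theta>"
    unfolding \<theta>_def models_All_list_upto \<phi>'_def
    using rado_sat_iff_edge_pattern[OF R fv] sat_i sat_F by auto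
  ultimately have "\<forall>\<^sub>F n in sequentially. models (fst (G n)) (snd (G n)) \<theta>"
    using ec unfolding elem_conv_def by blast
  then show ?thesis
  proof (rule eventually_mono)
    fix n assume "models (fst (G n)) (snd (G n)) \<theta>"
    then have "\<forall>f\<in>{1..p} \<rightarrow>\<^sub>E fst (G n). inj_on f {1..p} \<and> edge_pattern p (snd (G n)) f = F \<longrightarrow>
        sat (fst (G n)) (snd (G n)) f \<phi>'"
      unfolding \<theta>_def models_All_list_upto using sat_i sat_F by auto
    then show "\<forall>f\<in>{1..p} \<rightarrow>\<^sub>E fst (G n). inj_on f {1..p} \<and> edge_pattern p (snd (G n)) f = F \<longrightarrow>
        (sat (fst (G n)) (snd (G n)) f \<phi> \<longleftrightarrow> F \<in> rado_patterns p \<phi>)"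
      unfolding \<phi>'_def by (cases "F \<in> rado_patterns p \<phi>") auto
  qed
qed

lemma eventually_sat_iff_edge_pattern:
  fixes G :: "nat \<Rightarrow> nat set \<times> (nat \<Rightarrow> nat \<Rightarrow> bool)"
  assumes "fv \<phi> \<subseteq> {1..p}" "is_rado R" "elem_conv G (UNIV::nat set) R"
  shows "\<forall>\<^sub>F n in sequentially. \<forall>f\<in>{1..p} \<rightarrow>\<^sub>E fst (G n). inj_on f {1..p} \<longrightarrow>
           (sat (fst (G n)) (snd (G n)) f \<phi> \<longleftrightarrow> edge_pattern p (snd (G n)) f \<in> rado_patterns p \<phi>)"
proof -
  have "\<forall>\<^sub>F n in sequentially. \<forall>F\<in>Pow (pairs p). \<forall>f\<in>{1..p} \<rightarrow>\<^sub>E fst (G n).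
           inj_on f {1..p} \<and> edge_pattern p (snd (G n)) f = F \<longrightarrow>
           (sat (fst (G n)) (snd (G n)) f \<phi> \<longleftrightarrow> F \<in> rado_patterns p \<phi>)"
    using eventually_sat_iff_edge_pattern_eq[OF assms]
    by (intro eventually_ball_finite) (auto simp: finite_pairs)
  then show ?thesis by (rule eventually_mono) (use edge_pattern_subset in blast)
qed

lemma eventually_card_ge:
  fixes G :: "nat \<Rightarrow> nat set \<times> (nat \<Rightarrow> nat \<Rightarrow> bool)"
  assumes ec: "elem_conv G (UNIV::nat set) R" and fin: "\<forall>n. finite (fst (G n))"
  shows "\<forall>\<^sub>F n in sequentially. m \<le> card (fst (G n))"
proof -
  obtain \<psi> where fv: "fv \<psi> \<subseteq> {1..m}" and sat: "\<forall>(V::nat set) E a. sat V E a \<psi> = inj_on a {1..m}"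
    using ex_fm_inj_on by blast
  define \<theta> where "\<theta> = Neg (All_list [1..<m+1] (Neg \<psi>))"
  have models_\<theta>: "models V E \<theta> \<longleftrightarrow> (\<exists>b\<in>{1..m} \<rightarrow>\<^sub>E V. inj_on b {1..m})" for V :: "nat set" and E
    using models_All_list_upto[of V E m "Neg \<psi>"] sat unfolding \<theta>_def models_def by simp
  have "fv \<theta> = {}" unfolding \<theta>_def fv.simps fv_All_list_upto using fv by auto
  moreover have "models UNIV R \<theta>"
    unfolding models_\<theta> by (intro bexI[of _ "\<lambda>k\<in>{1..m}. k"]) (auto simp: inj_on_def)
  ultimately have "\<forall>\<^sub>F n in sequentially. models (fst (G n)) (snd (G n)) \<theta>"
    using ec unfolding elem_conv_def by blast
  then show ?thesis
  proof (rule eventually_mono)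
    fix n assume "models (fst (G n)) (snd (G n)) \<theta>"
    then obtain b where b: "b \<in> {1..m} \<rightarrow>\<^sub>E fst (G n)" "inj_on b {1..m}" unfolding models_\<theta> by blast
    have "m = card (b ` {1..m})" using card_image[OF b(2)] by simp
    also have "\<dots> \<le> card (fst (G n))" using b(1) fin by (intro card_mono) auto
    finally show "m \<le> card (fst (G n))" .
  qed
qed

lemma card_tendsto_at_top:
  fixes G :: "nat \<Rightarrow> nat set \<times> (nat \<Rightarrow> nat \<Rightarrow> bool)"
  assumes "elem_conv G (UNIV::nat set) R" "\<forall>n. finite (fst (G n))"
  shows "filterlim (\<lambda>n. real (card (fst (G n)))) at_top sequentially"
  unfolding filterlim_at_top
proof
  fix Z :: real
  show "\<forall>\<^sub>F n in sequentially. Z \<le> real (card (fst (G n)))"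
    using eventually_card_ge[OF assms, of "nat \<lceil>Z\<rceil>"]
    by (rule eventually_mono) (use real_nat_ceiling_ge[of Z] in linarith)
qed

definition pattern_weight :: "(nat \<times> nat) set \<Rightarrow> (nat \<times> nat) set \<Rightarrow> (nat \<times> nat \<Rightarrow> real) \<Rightarrow> real" where
  "pattern_weight D F v = (\<Prod>e\<in>F. v e) * (\<Prod>e\<in>D - F. 1 - v e)"

lemma pattern_weight_expand:
  assumes D: "finite D" and F: "F \<subseteq> D"
  shows "pattern_weight D F v = (\<Sum>T\<in>Pow (D - F). (-1) ^ card T * (\<Prod>e\<in>F \<union> T. v e))"
proof -
  have "(\<Prod>e\<in>D - F. 1 - v e) = (\<Prod>e\<in>D - F. (- v e) + 1)" by simp
  also have "\<dots> = (\<Sum>T\<in>Pow (D - F). (\<Prod>e\<in>T. - v e) * (\<Prod>e\<in>(D - F) - T. 1))"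
    using D by (intro prod_add) simp
  also have "\<dots> = (\<Sum>T\<in>Pow (D - F). (-1) ^ card T * (\<Prod>e\<in>T. v e))"
    by (simp add: prod_uminus)
  finally have expand: "(\<Prod>e\<in>D - F. 1 - v e) = (\<Sum>T\<in>Pow (D - F). (-1) ^ card T * (\<Prod>e\<in>T. v e))" .
  have union: "(\<Prod>e\<in>F. v e) * (\<Prod>e\<in>T. v e) = (\<Prod>e\<in>F \<union> T. v e)" if "T \<in> Pow (D - F)" for T
    using that D F by (subst prod.union_disjoint) (auto intro: finite_subset)
  show ?thesis
    unfolding pattern_weight_def expand sum_distrib_left
    using union by (intro sum.cong) (auto simp: algebra_simps)
qed

lemma sum_pattern_weight_expand:
  assumes "S \<subseteq> Pow (pairs p)"
  shows "(\<Sum>F\<in>S. pattern_weight (pairs p) F v) =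
    (\<Sum>F\<in>S. \<Sum>T\<in>Pow (pairs p - F). (-1) ^ card T * (\<Prod>e\<in>F \<union> T. v e))"
  using assms by (intro sum.cong refl pattern_weight_expand[OF finite_pairs]) auto

lemma prod_of_bool: "finite A \<Longrightarrow> (\<Prod>e\<in>A. of_bool (P e) :: 'a::comm_semiring_1) = of_bool (\<forall>e\<in>A. P e)"
  by (induction rule: finite_induct) auto

lemma pattern_weight_of_bool:
  assumes "finite D" "F \<subseteq> D"
  shows "pattern_weight D F (\<lambda>e. of_bool (P e)) = of_bool ({e\<in>D. P e} = F)"
proof -
  have "finite F" using assms finite_subset by blast
  then show ?thesis
    unfolding pattern_weight_def of_bool_not_iff[symmetric] using assms
    by (simp add: prod_of_bool) blast
qed

definition alternating_sum :: "nat \<Rightarrow> (nat \<times> nat) set set \<Rightarrow> ((nat \<times> nat) set \<Rightarrow> real) \<Rightarrow> real" where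
  "alternating_sum p S h = (\<Sum>F\<in>S. \<Sum>T\<in>Pow (pairs p - F). (-1) ^ card T * h (F \<union> T))"

lemma tendsto_alternating_sum:
  assumes "\<And>H. H \<subseteq> pairs p \<Longrightarrow> (\<lambda>n. f n H) \<longlonglongrightarrow> h H" and "S \<subseteq> Pow (pairs p)"
  shows "(\<lambda>n. alternating_sum p S (f n)) \<longlonglongrightarrow> alternating_sum p S h"
  unfolding alternating_sum_def using assms(2) by (intro tendsto_sum tendsto_mult_left assms(1)) auto

lemma hom_count_eq_sum_prod:
  assumes "finite V" "finite H"
  shows "real (hom_count p H V E) = (\<Sum>f\<in>{1..p} \<rightarrow>\<^sub>E V. \<Prod>e\<in>H. of_bool (E (f (fst e)) (f (snd e))))"
proof -
  have "{f \<in> {1..p} \<rightarrow>\<^sub>E V. \<forall>(i,j)\<in>H. E (f i) (f j)} = ({1..p} \<rightarrow>\<^sub>E V) \<inter> {f. \<forall>e\<in>H. E (f (fst e)) (f (snd e))}"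
    by (auto simp: split_beta)
  then show ?thesis using assms unfolding hom_count_def by (simp add: prod_of_bool finite_PiE)
qed

lemma card_edge_pattern_in_eq:
  assumes V: "finite V" and S: "S \<subseteq> Pow (pairs p)"
  shows "real (card {f \<in> {1..p} \<rightarrow>\<^sub>E V. edge_pattern p E f \<in> S}) =
    alternating_sum p S (\<lambda>H. real (hom_count p H V E))"
proof -
  let ?A = "{1..p} \<rightarrow>\<^sub>E V" and ?v = "\<lambda>f e. of_bool (E (f (fst e)) (f (snd e))) :: real"
  have fA: "finite ?A" using V by (simp add: finite_PiE)
  have fS: "finite S" using S finite_pairs by (meson finite_Pow_iff finite_subset)
  have indicator: "of_bool (edge_pattern p E f \<in> S) = (\<Sum>F\<in>S. pattern_weight (pairs p) F (?v f))" for f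
  proof -
    have "pattern_weight (pairs p) F (?v f) = of_bool (edge_pattern p E f = F)" if "F \<in> S" for F
      using S that unfolding edge_pattern_def by (subst pattern_weight_of_bool[OF finite_pairs]) auto
    then have "(\<Sum>F\<in>S. pattern_weight (pairs p) F (?v f)) = (\<Sum>F\<in>S. of_bool (edge_pattern p E f = F))"
      by (intro sum.cong) auto
    also have "\<dots> = of_bool (edge_pattern p E f \<in> S)"
      using fS by (simp add: of_bool_def sum.delta)
    finally show ?thesis by simp
  qed
  have "real (card {f \<in> ?A. edge_pattern p E f \<in> S}) = (\<Sum>f\<in>?A. of_bool (edge_pattern p E f \<in> S))"
    using fA by (simp add: Int_def)
  also have "\<dots> = (\<Sum>f\<in>?A. \<Sum>F\<in>S. \<Sum>T\<in>Pow (pairs p - F). (-1) ^ card T * (\<Prod>e\<in>F \<union> T. ?v f e))"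
    by (simp only: indicator sum_pattern_weight_expand[OF S])
  also have "\<dots> = (\<Sum>F\<in>S. \<Sum>f\<in>?A. \<Sum>T\<in>Pow (pairs p - F). (-1) ^ card T * (\<Prod>e\<in>F \<union> T. ?v f e))"
    by (rule sum.swap)
  also have "\<dots> = (\<Sum>F\<in>S. \<Sum>T\<in>Pow (pairs p - F). (-1) ^ card T * (\<Sum>f\<in>?A. \<Prod>e\<in>F \<union> T. ?v f e))"
    by (intro sum.cong refl) (subst sum.swap, simp add: sum_distrib_left)
  also have "\<dots> = alternating_sum p S (\<lambda>H. real (hom_count p H V E))"
  proof -
    have "finite (F \<union> T)" if "F \<in> S" "T \<in> Pow (pairs p - F)" for F T
      using that S by (intro finite_subset[OF _ finite_pairs]) auto
    then show ?thesis unfolding alternating_sum_def by (simp add: hom_count_eq_sum_prod[OF V])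
  qed
  finally show ?thesis .
qed

definition pattern_density :: "nat \<Rightarrow> (nat \<times> nat) set set \<Rightarrow> 'a set \<Rightarrow> ('a \<Rightarrow> 'a \<Rightarrow> bool) \<Rightarrow> real" where
  "pattern_density p S V E = real (card {f \<in> {1..p} \<rightarrow>\<^sub>E V. edge_pattern p E f \<in> S}) / real (card V) ^ p"

section \<open>Integrals against a graphon\<close>

lemma prob_space_unit_interval: "prob_space (restrict_space lborel {0..1::real})"
  by (rule prob_spaceI) (simp add: space_restrict_space emeasure_restrict_space)

lemma prob_space_unit_cube: "prob_space (unit_cube p)"
  unfolding unit_cube_def by (rule prob_space_PiM) (rule prob_space_unit_interval)

lemma space_unit_cube: "space (unit_cube p) = {1..p} \<rightarrow>\<^sub>E {0..1}"
  unfolding unit_cube_def by (simp add: space_PiM space_restrict_space)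

lemma graphon_measurable_unit_cube:
  assumes W: "graphon W" and i: "i \<in> {1..p}" and j: "j \<in> {1..p}"
  shows "(\<lambda>x. W (x i) (x j)) \<in> borel_measurable (unit_cube p)"
proof -
  have coord: "(\<lambda>x. x k) \<in> unit_cube p \<rightarrow>\<^sub>M lborel" if "k \<in> {1..p}" for k
  proof -
    have "(\<lambda>x. x k) \<in> unit_cube p \<rightarrow>\<^sub>M restrict_space lborel {0..1::real}"
      unfolding unit_cube_def using that by (rule measurable_component_singleton)
    moreover have "(\<lambda>y. y) \<in> restrict_space lborel {0..1::real} \<rightarrow>\<^sub>M lborel"
      by (rule measurable_restrict_space1) simp
    ultimately show ?thesis by (rule measurable_comp[where g="\<lambda>y. y", unfolded o_def])
  qed
  have pair: "(\<lambda>x. (x i, x j)) \<in> unit_cube p \<rightarrow>\<^sub>M restrict_space (lborel \<Otimes>\<^sub>M lborel) ({0..1} \<times> {0..1})"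
  proof (rule measurable_restrict_space2)
    show "(\<lambda>x. (x i, x j)) \<in> space (unit_cube p) \<rightarrow> {0..1} \<times> {0..1}"
      using i j unfolding space_unit_cube by (auto simp: PiE_iff)
    show "(\<lambda>x. (x i, x j)) \<in> unit_cube p \<rightarrow>\<^sub>M lborel \<Otimes>\<^sub>M lborel"
      using coord[OF i] coord[OF j] by (rule measurable_Pair)
  qed
  have "(\<lambda>z. W (fst z) (snd z)) \<in> borel_measurable (restrict_space (lborel \<Otimes>\<^sub>M lborel) ({0..1} \<times> {0..1}))"
    using W unfolding graphon_def by blast
  from measurable_comp[OF pair this] show ?thesis by (simp add: o_def)
qed

lemma integrable_graphon_prod:
  assumes W: "graphon W" and H: "H \<subseteq> pairs p"
  shows "integrable (unit_cube p) (\<lambda>x. \<Prod>e\<in>H. W (x (fst e)) (x (snd e)))"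
proof -
  interpret prob_space "unit_cube p" by (rule prob_space_unit_cube)
  have H': "fst e \<in> {1..p}" "snd e \<in> {1..p}" if "e \<in> H" for e using H that unfolding pairs_def by auto
  show ?thesis
  proof (rule integrable_const_bound[where B=1])
    show "AE x in unit_cube p. norm (\<Prod>e\<in>H. W (x (fst e)) (x (snd e))) \<le> 1"
    proof (rule AE_I2)
      fix x assume "x \<in> space (unit_cube p)"
      then have "x (fst e) \<in> {0..1}" "x (snd e) \<in> {0..1}" if "e \<in> H" for e
        using H'[OF that] unfolding space_unit_cube by auto
      then have "0 \<le> W (x (fst e)) (x (snd e)) \<and> W (x (fst e)) (x (snd e)) \<le> 1" if "e \<in> H" for e
        using W that unfolding graphon_def by blast
      then show "norm (\<Prod>e\<in>H. W (x (fst e)) (x (snd e))) \<le> 1"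
        by (simp add: abs_le_iff prod_le_1 prod_nonneg)
    qed
    show "(\<lambda>x. \<Prod>e\<in>H. W (x (fst e)) (x (snd e))) \<in> borel_measurable (unit_cube p)"
      using H' by (intro borel_measurable_prod graphon_measurable_unit_cube[OF W]) auto
  qed
qed

lemma integral_pattern_weights:
  assumes W: "graphon W" and S: "S \<subseteq> Pow (pairs p)"
  shows "(\<integral>x. (\<Sum>F\<in>S. pattern_weight (pairs p) F (\<lambda>e. W (x (fst e)) (x (snd e)))) \<partial>unit_cube p) =
    alternating_sum p S (\<lambda>H. hom_density_W p H W)"
proof -
  let ?w = "\<lambda>H x. \<Prod>e\<in>H. W (x (fst e)) (x (snd e))"
  have int: "integrable (unit_cube p) (?w (F \<union> T))" if "F \<in> S" "T \<in> Pow (pairs p - F)" for F T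
    using that S by (intro integrable_graphon_prod[OF W]) auto
  have "(\<integral>x. (\<Sum>F\<in>S. pattern_weight (pairs p) F (\<lambda>e. W (x (fst e)) (x (snd e)))) \<partial>unit_cube p) =
        (\<integral>x. (\<Sum>F\<in>S. \<Sum>T\<in>Pow (pairs p - F). (-1) ^ card T * ?w (F \<union> T) x) \<partial>unit_cube p)"
    by (simp only: sum_pattern_weight_expand[OF S])
  also have "\<dots> = (\<Sum>F\<in>S. \<integral>x. (\<Sum>T\<in>Pow (pairs p - F). (-1) ^ card T * ?w (F \<union> T) x) \<partial>unit_cube p)"
    by (rule Bochner_Integration.integral_sum) (use int in auto)
  also have "\<dots> = (\<Sum>F\<in>S. \<Sum>T\<in>Pow (pairs p - F). \<integral>x. (-1) ^ card T * ?w (F \<union> T) x \<partial>unit_cube p)"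
    by (intro sum.cong refl Bochner_Integration.integral_sum) (use int in auto)
  also have "\<dots> = alternating_sum p S (\<lambda>H. hom_density_W p H W)"
    unfolding alternating_sum_def hom_density_W_def by (simp add: case_prod_beta)
  finally show ?thesis .
qed

lemma pattern_density_tendsto:
  assumes fin: "\<forall>n. finite (fst (G n))" and L: "L_conv G W" and W: "graphon W" and S: "S \<subseteq> Pow (pairs p)"
  shows "(\<lambda>n. pattern_density p S (fst (G n)) (snd (G n)))
    \<longlonglongrightarrow> (\<integral>x. (\<Sum>F\<in>S. pattern_weight (pairs p) F (\<lambda>e. W (x (fst e)) (x (snd e)))) \<partial>unit_cube p)"
proof -
  have "pattern_density p S (fst (G n)) (snd (G n)) =
    alternating_sum p S (\<lambda>H. real (hom_count p H (fst (G n)) (snd (G n))) / real (card (fst (G n))) ^ p)" for n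
    unfolding pattern_density_def card_edge_pattern_in_eq[OF fin[rule_format] S] alternating_sum_def
    by (simp add: sum_divide_distrib)
  moreover have "(\<lambda>n. real (hom_count p H (fst (G n)) (snd (G n))) / real (card (fst (G n))) ^ p)
      \<longlonglongrightarrow> hom_density_W p H W" if "H \<subseteq> pairs p" for H
    using L that unfolding L_conv_def pairs_def by blast
  ultimately show ?thesis
    unfolding integral_pattern_weights[OF W S] using tendsto_alternating_sum[OF _ S] by simp
qed

lemma ex_ipoly_sum:
  assumes "finite A" "\<forall>a\<in>A. \<exists>P. pvars P \<subseteq> X \<and> (\<forall>v. peval v P = g a v)"
  shows "\<exists>P. pvars P \<subseteq> X \<and> (\<forall>v. peval v P = (\<Sum>a\<in>A. g a v))"
  using assms
proof (induction A rule: finite_induct)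
  case empty
  show ?case by (intro exI[of _ "PConst 0"]) simp
next
  case (insert x A)
  then obtain P Q where "pvars P \<subseteq> X" "\<forall>v. peval v P = (\<Sum>a\<in>A. g a v)"
    and "pvars Q \<subseteq> X" "\<forall>v. peval v Q = g x v"
    by blast
  with insert.hyps show ?case by (intro exI[of _ "PAdd Q P"]) simp
qed

lemma ex_ipoly_prod:
  assumes "finite A" "\<forall>a\<in>A. \<exists>P. pvars P \<subseteq> X \<and> (\<forall>v. peval v P = g a v)"
  shows "\<exists>P. pvars P \<subseteq> X \<and> (\<forall>v. peval v P = (\<Prod>a\<in>A. g a v))"
  using assms
proof (induction A rule: finite_induct)
  case empty
  show ?case by (intro exI[of _ "PConst 1"]) simp
next
  case (insert x A)
  then obtain P Q where "pvars P \<subseteq> X" "\<forall>v. peval v P = (\<Prod>a\<in>A. g a v)"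
    and "pvars Q \<subseteq> X" "\<forall>v. peval v Q = g x v"
    by blast
  with insert.hyps show ?case by (intro exI[of _ "PMul Q P"]) simp
qed

lemma ex_ipoly_pattern_weight:
  assumes F: "F \<subseteq> pairs p"
  shows "\<exists>P. pvars P \<subseteq> pairs p \<and> (\<forall>v. peval v P = pattern_weight (pairs p) F (\<lambda>e. v (fst e) (snd e)))"
proof -
  have "finite F" using F finite_pairs finite_subset by blast
  then obtain P where P: "pvars P \<subseteq> pairs p" "\<forall>v. peval v P = (\<Prod>e\<in>F. v (fst e) (snd e))"
    using F by (atomize_elim, intro ex_ipoly_prod) (auto intro!: exI[of _ "PVar _ _"])
  obtain Q where Q: "pvars Q \<subseteq> pairs p" "\<forall>v. peval v Q = (\<Prod>e\<in>pairs p - F. 1 - v (fst e) (snd e))"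
    by (atomize_elim, intro ex_ipoly_prod)
      (auto simp: finite_pairs intro!: exI[of _ "PAdd (PConst 1) (PMul (PConst (-1)) (PVar _ _))"])
  show ?thesis using P Q unfolding pattern_weight_def by (intro exI[of _ "PMul P Q"]) simp
qed

lemma ex_ipoly_sum_pattern_weight:
  assumes S: "S \<subseteq> Pow (pairs p)"
  shows "\<exists>P. pvars P \<subseteq> pairs p \<and>
    (\<forall>v. peval v P = (\<Sum>F\<in>S. pattern_weight (pairs p) F (\<lambda>e. v (fst e) (snd e))))"
proof (rule ex_ipoly_sum)
  show "finite S" using S finite_pairs by (meson finite_Pow_iff finite_subset)
  show "\<forall>F\<in>S. \<exists>P. pvars P \<subseteq> pairs p \<and> (\<forall>v. peval v P = pattern_weight (pairs p) F (\<lambda>e. v (fst e) (snd e)))"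
    using S ex_ipoly_pattern_weight by blast
qed

section \<open>Non-injective assignments\<close>

lemma card_not_inj_on_le:
  assumes V: "finite V"
  shows "card {f \<in> {1..p} \<rightarrow>\<^sub>E V. \<not> inj_on f {1..p}} \<le> card (pairs p) * card V ^ (p - 1)"
proof -
  let ?A = "{1..p} \<rightarrow>\<^sub>E V"
  have collision: "card {f \<in> ?A. f (fst e) = f (snd e)} \<le> card V ^ (p - 1)" if e: "e \<in> pairs p" for e
  proof -
    obtain i j where ij: "e = (i,j)" "1 \<le> i" "i < j" "j \<le> p" using e unfolding pairs_def by auto
    have "{f \<in> ?A. f (fst e) = f (snd e)} \<subseteq> (\<lambda>g. g(j := g i)) ` (({1..p} - {j}) \<rightarrow>\<^sub>E V)"
    proof
      fix f assume "f \<in> {f \<in> ?A. f (fst e) = f (snd e)}"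
      then have "f(j := undefined) \<in> ({1..p} - {j}) \<rightarrow>\<^sub>E V" and "f = (f(j := undefined))(j := f i)"
        using ij by (auto simp: PiE_iff extensional_def fun_eq_iff)
      then show "f \<in> (\<lambda>g. g(j := g i)) ` (({1..p} - {j}) \<rightarrow>\<^sub>E V)"
        using ij by (intro image_eqI[of _ _ "f(j := undefined)"]) auto
    qed
    then have "card {f \<in> ?A. f (fst e) = f (snd e)} \<le> card ((\<lambda>g. g(j := g i)) ` (({1..p} - {j}) \<rightarrow>\<^sub>E V))"
      using V by (intro card_mono finite_imageI finite_PiE) auto
    also have "\<dots> \<le> card (({1..p} - {j}) \<rightarrow>\<^sub>E V)"
      using V by (intro card_image_le finite_PiE) auto
    also have "\<dots> = card V ^ (p - 1)" using ij by (simp add: card_PiE)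
    finally show ?thesis .
  qed
  have "{f \<in> ?A. \<not> inj_on f {1..p}} \<subseteq> (\<Union>e\<in>pairs p. {f \<in> ?A. f (fst e) = f (snd e)})"
    using inj_on_iff_pairs by blast
  then have "card {f \<in> ?A. \<not> inj_on f {1..p}} \<le> card (\<Union>e\<in>pairs p. {f \<in> ?A. f (fst e) = f (snd e)})"
    using V finite_pairs by (intro card_mono) (auto simp: finite_PiE)
  also have "\<dots> \<le> (\<Sum>e\<in>pairs p. card {f \<in> ?A. f (fst e) = f (snd e)})"
    by (rule card_UN_le[OF finite_pairs])
  also have "\<dots> \<le> card (pairs p) * card V ^ (p - 1)"
    using sum_mono[OF collision] by simp
  finally show ?thesis .
qed

lemma abs_card_diff_le_card:
  assumes "finite X" "finite Y" "finite N" "X - N = Y - N"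
  shows "\<bar>real (card X) - real (card Y)\<bar> \<le> real (card N)"
proof -
  have "card A \<le> card B + card N" if "finite A" "finite B" "A - N = B - N" for A B
  proof -
    have "card A \<le> card ((B - N) \<union> N)" using that assms(3) by (intro card_mono) auto
    also have "\<dots> \<le> card (B - N) + card N" by (rule card_Un_le)
    also have "\<dots> \<le> card B + card N" using that by (simp add: card_mono)
    finally show ?thesis .
  qed
  from this[OF assms(1,2,4)] this[OF assms(2,1) assms(4)[symmetric]] show ?thesis by linarith
qed

lemma abs_stone_minus_pattern_density_le:
  assumes V: "finite V" "V \<noteq> {}"
    and sat: "\<forall>f\<in>{1..p} \<rightarrow>\<^sub>E V. inj_on f {1..p} \<longrightarrow> (sat V E f \<phi> \<longleftrightarrow> edge_pattern p E f \<in> S)"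
  shows "\<bar>stone p \<phi> V E - pattern_density p S V E\<bar> \<le> real (card (pairs p)) / real (card V)"
proof -
  let ?A = "{1..p} \<rightarrow>\<^sub>E V" and ?N = "real (card V)"
  define X where "X = {f \<in> ?A. sat V E f \<phi>}"
  define Y where "Y = {f \<in> ?A. edge_pattern p E f \<in> S}"
  define NI where "NI = {f \<in> ?A. \<not> inj_on f {1..p}}"
  have N: "?N > 0" using V by (simp add: card_gt_0_iff)
  have fA: "finite ?A" using V by (simp add: finite_PiE)
  have "X - NI = Y - NI" using sat unfolding X_def Y_def NI_def by blast
  then have "\<bar>real (card X) - real (card Y)\<bar> \<le> real (card NI)"
    using fA unfolding X_def Y_def NI_def by (intro abs_card_diff_le_card) simp_all
  also have "\<dots> \<le> real (card (pairs p) * card V ^ (p - 1))"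
    using card_not_inj_on_le[OF V(1), of p] unfolding NI_def of_nat_le_iff .
  also have "\<dots> = real (card (pairs p)) * ?N ^ (p - 1)" by simp
  also have "\<dots> \<le> real (card (pairs p)) / ?N * ?N ^ p"
  proof (cases p)
    case 0
    moreover have "pairs 0 = {}" unfolding pairs_def by auto
    ultimately show ?thesis by simp
  next
    case (Suc q)
    then show ?thesis using N by simp
  qed
  moreover have "stone p \<phi> V E - pattern_density p S V E = (real (card X) - real (card Y)) / ?N ^ p"
    unfolding stone_def pattern_density_def X_def Y_def by (simp add: diff_divide_distrib)
  ultimately show ?thesis using N by (simp add: abs_divide pos_divide_le_eq)
qed

lemma stone_minus_pattern_density_tendsto_0:
  fixes G :: "nat \<Rightarrow> nat set \<times> (nat \<Rightarrow> nat \<Rightarrow> bool)"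
  assumes fv: "fv \<phi> \<subseteq> {1..p}" and R: "is_rado R" and ec: "elem_conv G (UNIV::nat set) R"
    and fin: "\<forall>n. finite (fst (G n))"
  shows "(\<lambda>n. stone p \<phi> (fst (G n)) (snd (G n)) - pattern_density p (rado_patterns p \<phi>) (fst (G n)) (snd (G n)))
    \<longlonglongrightarrow> 0"
proof (rule Lim_null_comparison)
  show "(\<lambda>n. real (card (pairs p)) / real (card (fst (G n)))) \<longlonglongrightarrow> 0"
    by (rule tendsto_divide_0[OF tendsto_const filterlim_at_top_imp_at_infinity[OF card_tendsto_at_top[OF ec fin]]])
  show "\<forall>\<^sub>F n in sequentially. norm (stone p \<phi> (fst (G n)) (snd (G n)) -
      pattern_density p (rado_patterns p \<phi>) (fst (G n)) (snd (G n))) \<le> real (card (pairs p)) / real (card (fst (G n)))"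
    using eventually_card_ge[OF ec fin, of 1] eventually_sat_iff_edge_pattern[OF fv R ec]
  proof eventually_elim
    case (elim n)
    then show ?case
      unfolding real_norm_def using fin by (intro abs_stone_minus_pattern_density_le) auto
  qed
qed

theorem theorem5p15:
  fixes p :: nat and \<phi> :: fm
  assumes "fv \<phi> \<subseteq> {1..p}"
  shows "\<exists>P. pvars P \<subseteq> {(i,j). 1 \<le> i \<and> i < j \<and> j \<le> p} \<and>
    (\<forall>(G :: nat \<Rightarrow> nat set \<times> (nat \<Rightarrow> nat \<Rightarrow> bool)) (R :: nat \<Rightarrow> nat \<Rightarrow> bool) W.
       (\<forall>n. finite_graph (fst (G n)) (snd (G n))) \<longrightarrow> is_rado R \<longrightarrow>
       elem_conv G (UNIV :: nat set) R \<longrightarrow> graphon W \<longrightarrow> L_conv G W \<longrightarrow>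
       (\<lambda>n. stone p \<phi> (fst (G n)) (snd (G n)))
         \<longlonglongrightarrow> integral\<^sup>L (unit_cube p) (\<lambda>x. peval (\<lambda>i j. W (x i) (x j)) P))"
proof -
  let ?S = "rado_patterns p \<phi>"
  obtain P where P: "pvars P \<subseteq> pairs p"
    "\<forall>v. peval v P = (\<Sum>F\<in>?S. pattern_weight (pairs p) F (\<lambda>e. v (fst e) (snd e)))"
    using ex_ipoly_sum_pattern_weight[OF rado_patterns_subset] by blast
  show ?thesis
  proof (intro exI[of _ P] conjI allI impI)
    show "pvars P \<subseteq> {(i,j). 1 \<le> i \<and> i < j \<and> j \<le> p}" using P(1) unfolding pairs_def .
  next
    fix G :: "nat \<Rightarrow> nat set \<times> (nat \<Rightarrow> nat \<Rightarrow> bool)" and R W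
    assume "\<forall>n. finite_graph (fst (G n)) (snd (G n))" "is_rado R" "elem_conv G UNIV R" "graphon W" "L_conv G W"
    moreover from this(1) have "\<forall>n. finite (fst (G n))" unfolding finite_graph_def by blast
    ultimately have "(\<lambda>n. (stone p \<phi> (fst (G n)) (snd (G n)) - pattern_density p ?S (fst (G n)) (snd (G n)))
        + pattern_density p ?S (fst (G n)) (snd (G n)))
      \<longlonglongrightarrow> 0 + (\<integral>x. (\<Sum>F\<in>?S. pattern_weight (pairs p) F (\<lambda>e. W (x (fst e)) (x (snd e)))) \<partial>unit_cube p)"
      using assms by (intro tendsto_add stone_minus_pattern_density_tendsto_0 pattern_density_tendsto
          rado_patterns_subset)
    then show "(\<lambda>n. stone p \<phi> (fst (G n)) (snd (G n)))
        \<longlonglongrightarrow> integral\<^sup>L (unit_cube p) (\<lambda>x. peval (\<lambda>i j. W (x i) (x j)) P)"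
      using P(2) by simp
  qed
qed

end
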